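(* Let $p$ be a prime and $n \geq 2$. Let $N$ be the cyclic group of order $p^n$, let $K$ be the Sylow $p$-subgroup of $\mathrm{Aut}(N)$, and let $G := N \rtimes K$ (with the natural action). Then $G$ is weakly-top.
   Context: For a group $H$, $H'$ denotes its commutator subgroup. A finite group $G$ is weakly-top if $|H/H'| \leq |G/G'|$ for every proper subgroup $H<G$. *)

theory Defs
  imports "HOL-Algebra.Algebra" "HOL-Computational_Algebra.Primes"
begin

definition abelianization_order :: "('a, 'b) monoid_scheme \<Rightarrow> nat" where
  "abelianization_order G = order (G Mod derived G (carrier G))"

definition weakly_top :: "('a, 'b) monoid_scheme \<Rightarrow> bool" where
  "weakly_top G \<longleftrightarrow> group G \<and> finite (carrier G) \<and>
     (\<forall>H. subgroup H G \<and> H \<noteq> carrier G \<longrightarrow>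
        abelianization_order (G\<lparr>carrier := H\<rparr>) \<le> abelianization_order G)"

definition sylow_subgroup :: "('a, 'b) monoid_scheme \<Rightarrow> nat \<Rightarrow> 'a set \<Rightarrow> bool" where
  "sylow_subgroup G p K \<longleftrightarrow> subgroup K G \<and> card K = p ^ multiplicity p (order G)"

definition aut_semidirect :: "('a, 'b) monoid_scheme \<Rightarrow> ('a \<Rightarrow> 'a) set \<Rightarrow> ('a \<times> ('a \<Rightarrow> 'a)) monoid" where
  "aut_semidirect N K =
    \<lparr>carrier = carrier N \<times> K,
     monoid.mult = (\<lambda>(a, f) (b, g). (a \<otimes>\<^bsub>N\<^esub> f b, f \<otimes>\<^bsub>AutoGroup N\<^esub> g)),
     one = (\<one>\<^bsub>N\<^esub>, \<one>\<^bsub>AutoGroup N\<^esub>)\<rparr>"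

end

theory Submission
  imports Defs "HOL-Number_Theory.Number_Theory"
begin

text \<open>
  Every automorphism of \<open>N\<close> is a power map
  \<open>x \<mapsto> x^u\<close>, and those in the Sylow subgroup \<open>K\<close> (of order \<open>p^(n-1)\<close>) have \<open>u = 1 mod p\<close>.
  The commutator of \<open>(a, x \<mapsto> x^u)\<close> and \<open>(b, x \<mapsto> x^v)\<close> is \<open>(b^(u-1) a^-(v-1), 1)\<close>, so \<open>G'\<close>
  lies in the group of pairs \<open>(x, 1)\<close> with \<open>x^(p^(n-1)) = 1\<close> and \<open>|G/G'| \<ge> |G| / p^(n-1) = p^n\<close>.

  For a subgroup \<open>H\<close> let \<open>M = {b. (b, 1) \<in> H}\<close> and let \<open>Q\<close> be the image of \<open>H\<close> in \<open>K\<close>, so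
  \<open>|H| \<le> |M| |Q|\<close>. Pick \<open>x \<mapsto> x^u\<^sub>0\<close> in \<open>Q\<close> with \<open>t = gcd(u\<^sub>0 - 1, p^n)\<close> least; since the
  divisors of \<open>p^n\<close> form a chain, every exponent occurring in \<open>Q\<close> is \<open>1 mod t\<close>, so
  \<open>|Q| \<le> p^n / t\<close>. Commuting \<open>(b, 1) \<in> H\<close> with an element of \<open>H\<close> over \<open>x \<mapsto> x^u\<^sub>0\<close> gives
  \<open>(b^-(u\<^sub>0-1), 1) \<in> H'\<close>, and \<open>b \<mapsto> b^(u\<^sub>0-1)\<close> has fibres of size at most \<open>t\<close>, so
  \<open>|M| \<le> t |H'|\<close>. Hence \<open>|H/H'| \<le> p^n \<le> |G/G'|\<close>.
\<close>

lemma card_le_mult_card_image: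
  assumes "finite A" and "\<And>y. y \<in> f ` A \<Longrightarrow> card {x \<in> A. f x = y} \<le> k"
  shows "card A \<le> k * card (f ` A)"
proof -
  have "A = (\<Union>y\<in>f ` A. {x \<in> A. f x = y})" by auto
  then have "card A \<le> (\<Sum>y\<in>f ` A. card {x \<in> A. f x = y})"
    using card_UN_le[of "f ` A" "\<lambda>y. {x \<in> A. f x = y}"] assms(1) by simp
  also have "\<dots> \<le> k * card (f ` A)"
    using sum_bounded_above[of "f ` A" _ k] assms(2) by (simp add: mult.commute)
  finally show ?thesis .
qed

lemma card_le_div_if_cong:
  fixes P m :: nat
  assumes "S \<subseteq> {..<P}" and "m dvd P" and "m > 0"
    and "\<And>i j. i \<in> S \<Longrightarrow> j \<in> S \<Longrightarrow> [i = j] (mod m)"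
  shows "card S \<le> P div m"
proof -
  have "inj_on (\<lambda>i. i div m) S"
  proof (rule inj_onI)
    fix i j assume "i \<in> S" "j \<in> S" "i div m = j div m"
    with assms(4) show "i = j" unfolding cong_def by (metis div_mult_mod_eq)
  qed
  moreover have "(\<lambda>i. i div m) ` S \<subseteq> {..<P div m}"
  proof -
    obtain k where "P = k * m" using assms(2) by (metis dvd_div_mult_self)
    then show ?thesis using assms(1,3) by (auto intro: less_mult_imp_div_less)
  qed
  ultimately show ?thesis
    by (metis card_image card_lessThan card_mono finite_lessThan)
qed

lemma cong_cancel_div_gcd_nat:
  fixes d x y m :: nat
  assumes "[d * x = d * y] (mod m)" and "m > 0"
  shows "[x = y] (mod m div gcd d m)"
proof -
  define g where "g = gcd (int d) (int m)"
  have "g \<noteq> 0" using assms(2) by (simp add: g_def)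
  have "int m dvd int d * (int x - int y)"
    using assms(1) by (simp add: cong_iff_dvd_diff right_diff_distrib flip: cong_int_iff)
  then have "g * (int m div g) dvd g * ((int d div g) * (int x - int y))"
    by (simp add: g_def mult.assoc [symmetric])
  then have "int m div g dvd (int d div g) * (int x - int y)"
    using \<open>g \<noteq> 0\<close> by simp
  moreover have "coprime (int m div g) (int d div g)"
    using div_gcd_coprime[of "int m" "int d"] assms(2) by (simp add: g_def gcd.commute)
  ultimately have "int m div g dvd int x - int y"
    using coprime_dvd_mult_right_iff by blast
  then show ?thesis
    by (simp add: g_def cong_iff_dvd_diff zdiv_int flip: cong_int_iff)
qed

lemma cong_pow_prime_power_self:
  fixes u :: nat
  assumes "Factorial_Ring.prime p"
  shows "[u ^ (p ^ k) = u] (mod p)"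
proof (induction k)
  case (Suc k)
  have fermat: "[v ^ p = v] (mod p)" for v :: nat
  proof (cases "p dvd v")
    case True
    moreover have "p dvd v ^ p"
      using True dvd_power dvd_trans prime_gt_0_nat[OF assms] by blast
    ultimately show ?thesis by (simp add: cong_def dvd_imp_mod_0)
  next
    case False
    have "[v ^ (p - 1) * v = 1 * v] (mod p)"
      using cong_scalar_right fermat_theorem[OF assms False] by blast
    moreover have "v ^ (p - 1) * v = v ^ p"
      using prime_gt_0_nat[OF assms] by (rule power_minus_mult)
    ultimately show ?thesis by simp
  qed
  have "u ^ p ^ Suc k = (u ^ p ^ k) ^ p" by (simp add: power_mult [symmetric] mult.commute)
  also have "[\<dots> = u ^ p] (mod p)" using Suc.IH by (rule cong_pow)
  also have "[u ^ p = u] (mod p)" by (rule fermat)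
  finally show ?case .
qed simp

lemma obtain_least_gcd_prime_power:
  fixes p n :: nat and S :: "nat set"
  assumes "Factorial_Ring.prime p" and "S \<noteq> {}"
  obtains s0 where "s0 \<in> S" and "\<And>s. s \<in> S \<Longrightarrow> gcd s0 (p ^ n) dvd s"
proof -
  let ?T = "(\<lambda>s. gcd s (p ^ n)) ` S"
  have "?T \<subseteq> {..p ^ n}"
    using prime_gt_0_nat[OF assms(1)] by (auto intro: dvd_imp_le)
  then have "finite ?T" by (rule finite_subset) simp
  then obtain s0 where "s0 \<in> S" and min: "gcd s0 (p ^ n) = Min ?T"
    using Min_in assms(2) by (metis (no_types, lifting) empty_is_image imageE)
  have "gcd s0 (p ^ n) dvd s" if "s \<in> S" for s
  proof -
    obtain i j where "gcd s0 (p ^ n) = p ^ i" and "gcd s (p ^ n) = p ^ j"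
      using divides_primepow_nat[OF assms(1)] by (metis gcd_dvd2)
    moreover have "gcd s0 (p ^ n) \<le> gcd s (p ^ n)"
      using min Min_le[OF \<open>finite ?T\<close>] that by simp
    ultimately have "gcd s0 (p ^ n) dvd gcd s (p ^ n)"
      using prime_gt_1_nat[OF assms(1)] by (metis le_imp_power_dvd power_le_imp_le_exp)
    then show ?thesis using dvd_trans gcd_dvd1 by blast
  qed
  with \<open>s0 \<in> S\<close> show thesis using that by blast
qed

lemma (in group) commutator_eq_iff:
  assumes "x \<in> carrier G" and "y \<in> carrier G" and "c \<in> carrier G"
  shows "x \<otimes> y \<otimes> inv x \<otimes> inv y = c \<longleftrightarrow> c \<otimes> (y \<otimes> x) = x \<otimes> y"
proof -
  have "x \<otimes> y \<otimes> inv x \<otimes> inv y = x \<otimes> y \<otimes> inv (y \<otimes> x)"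
    using assms by (simp add: inv_mult_group m_assoc)
  also have "\<dots> = c \<longleftrightarrow> x \<otimes> y = c \<otimes> (y \<otimes> x)"
    using assms by (metis inv_solve_right m_closed)
  finally show ?thesis by auto
qed

lemma (in group) abelianization_order_subgroup:
  assumes "subgroup H G" and "finite H"
  shows "abelianization_order (G\<lparr>carrier := H\<rparr>) * card (derived G H) = card H"
proof -
  interpret H: group "G\<lparr>carrier := H\<rparr>"
    using subgroup_imp_group[OF assms(1)] .
  have "derived (G\<lparr>carrier := H\<rparr>) H = derived G H"
    using derived_consistent[OF subset_refl assms(1)] .
  moreover have "subgroup (derived (G\<lparr>carrier := H\<rparr>) H) (G\<lparr>carrier := H\<rparr>)"
    using H.derived_is_subgroup[of H] by simp
  ultimately show ?thesis
    using H.lagrange[of "derived G H"]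
    by (simp add: abelianization_order_def order_def FactGroup_def)
qed

lemma carrier_AutoGroup: "carrier (AutoGroup N) = auto N"
  by (simp add: AutoGroup_def BijGroup_def)

lemma AutoGroup_mult_apply:
  assumes "f \<in> auto N" and "h \<in> auto N" and "x \<in> carrier N"
  shows "(f \<otimes>\<^bsub>AutoGroup N\<^esub> h) x = f (h x)"
  using assms by (simp add: AutoGroup_def BijGroup_def auto_def compose_def)

lemma AutoGroup_one_apply: "x \<in> carrier N \<Longrightarrow> \<one>\<^bsub>AutoGroup N\<^esub> x = x"
  by (simp add: AutoGroup_def BijGroup_def)

lemma aut_semidirect_simps [simp]:
  "carrier (aut_semidirect N K) = carrier N \<times> K"
  "(a, f) \<otimes>\<^bsub>aut_semidirect N K\<^esub> (b, h) = (a \<otimes>\<^bsub>N\<^esub> f b, f \<otimes>\<^bsub>AutoGroup N\<^esub> h)"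
  "\<one>\<^bsub>aut_semidirect N K\<^esub> = (\<one>\<^bsub>N\<^esub>, \<one>\<^bsub>AutoGroup N\<^esub>)"
  by (simp_all add: aut_semidirect_def)

lemma group_aut_semidirect:
  assumes "group N" and "subgroup K (AutoGroup N)"
  shows "group (aut_semidirect N K)"
proof -
  let ?G = "aut_semidirect N K"
  interpret N: group N by fact
  interpret A: group "AutoGroup N" by (rule N.AutoGroup)
  interpret K: subgroup K "AutoGroup N" by fact
  have auto: "f \<in> K \<Longrightarrow> f \<in> auto N" for f
    using K.subset carrier_AutoGroup by blast
  have hom: "f \<in> K \<Longrightarrow> f \<in> hom N N" for f
    using auto by (simp add: auto_def)
  have closed: "f \<in> K \<Longrightarrow> a \<in> carrier N \<Longrightarrow> f a \<in> carrier N" for f a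
    using hom by (auto simp: hom_def)
  show ?thesis
  proof (rule groupI)
    fix x y assume "x \<in> carrier ?G" "y \<in> carrier ?G"
    then show "x \<otimes>\<^bsub>?G\<^esub> y \<in> carrier ?G"
      by (cases x, cases y) (auto simp: closed)
  next
    show "\<one>\<^bsub>?G\<^esub> \<in> carrier ?G" by simp
  next
    fix x y z
    assume "x \<in> carrier ?G" "y \<in> carrier ?G" "z \<in> carrier ?G"
    then obtain a f b h c k where xyz: "x = (a, f)" "y = (b, h)" "z = (c, k)"
      "a \<in> carrier N" "b \<in> carrier N" "c \<in> carrier N" "f \<in> K" "h \<in> K" "k \<in> K"
      by auto
    then have "a \<otimes>\<^bsub>N\<^esub> f b \<otimes>\<^bsub>N\<^esub> (f \<otimes>\<^bsub>AutoGroup N\<^esub> h) c = a \<otimes>\<^bsub>N\<^esub> f (b \<otimes>\<^bsub>N\<^esub> h c)"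
      by (simp add: AutoGroup_mult_apply auto closed hom_mult[OF hom] N.m_assoc)
    with xyz show "x \<otimes>\<^bsub>?G\<^esub> y \<otimes>\<^bsub>?G\<^esub> z = x \<otimes>\<^bsub>?G\<^esub> (y \<otimes>\<^bsub>?G\<^esub> z)"
      by (simp add: A.m_assoc)
  next
    fix x assume "x \<in> carrier ?G"
    then show "\<one>\<^bsub>?G\<^esub> \<otimes>\<^bsub>?G\<^esub> x = x"
      by (auto simp: AutoGroup_one_apply closed)
  next
    fix x assume "x \<in> carrier ?G"
    then obtain a f where x: "x = (a, f)" "a \<in> carrier N" "f \<in> K" by auto
    define h where "h = inv\<^bsub>AutoGroup N\<^esub> f"
    have "h \<in> K" using x(3) by (simp add: h_def)
    then have "h (inv\<^bsub>N\<^esub> a) \<otimes>\<^bsub>N\<^esub> h a = \<one>\<^bsub>N\<^esub>"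
      using x(2) by (simp add: hom_mult[OF hom, symmetric] hom_one[OF hom] N.group_axioms)
    with x \<open>h \<in> K\<close> have "(h (inv\<^bsub>N\<^esub> a), h) \<otimes>\<^bsub>?G\<^esub> x = \<one>\<^bsub>?G\<^esub>"
      by (simp add: h_def)
    moreover have "(h (inv\<^bsub>N\<^esub> a), h) \<in> carrier ?G"
      using \<open>h \<in> K\<close> x(2) by (simp add: closed)
    ultimately show "\<exists>y\<in>carrier ?G. y \<otimes>\<^bsub>?G\<^esub> x = \<one>\<^bsub>?G\<^esub>" by blast
  qed
qed

lemma snd_mult_aut_semidirect:
  "snd (x \<otimes>\<^bsub>aut_semidirect N K\<^esub> y) = snd x \<otimes>\<^bsub>AutoGroup N\<^esub> snd y"
  by (cases x, cases y) simp

lemma snd_inv_aut_semidirect: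
  assumes "group N" and "subgroup K (AutoGroup N)" and "x \<in> carrier (aut_semidirect N K)"
  shows "snd (inv\<^bsub>aut_semidirect N K\<^esub> x) = inv\<^bsub>AutoGroup N\<^esub> (snd x)"
proof -
  let ?G = "aut_semidirect N K"
  interpret G: group ?G by (rule group_aut_semidirect[OF assms(1,2)])
  interpret A: group "AutoGroup N" by (rule group.AutoGroup[OF assms(1)])
  have "snd (inv\<^bsub>?G\<^esub> x) \<otimes>\<^bsub>AutoGroup N\<^esub> snd x = \<one>\<^bsub>AutoGroup N\<^esub>"
    using G.l_inv[OF assms(3)] by (metis snd_mult_aut_semidirect aut_semidirect_simps(3) snd_conv)
  moreover have "snd x \<in> K" "snd (inv\<^bsub>?G\<^esub> x) \<in> K"
    using assms(3) G.inv_closed[OF assms(3)] by (auto simp: mem_Times_iff)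
  ultimately show ?thesis
    using A.inv_equality subgroup.subset[OF assms(2)] by (metis subsetD)
qed

lemma card_subgroup_aut_semidirect_le:
  assumes "group N" and "subgroup K (AutoGroup N)"
    and "subgroup H (aut_semidirect N K)" and "finite H"
  shows "card H \<le> card {b. (b, \<one>\<^bsub>AutoGroup N\<^esub>) \<in> H} * card (snd ` H)"
proof (rule card_le_mult_card_image[OF assms(4)])
  let ?G = "aut_semidirect N K"
  interpret G: group ?G by (rule group_aut_semidirect[OF assms(1,2)])
  interpret A: group "AutoGroup N" by (rule group.AutoGroup[OF assms(1)])
  interpret H: subgroup H ?G by fact
  fix f0 assume "f0 \<in> snd ` H"
  then obtain x0 where x0: "x0 \<in> H" "snd x0 = f0" by blast
  let ?F = "{x \<in> H. snd x = f0}"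
  let ?d = "\<lambda>x. x \<otimes>\<^bsub>?G\<^esub> inv\<^bsub>?G\<^esub> x0"
  have d: "?d x = (fst (?d x), \<one>\<^bsub>AutoGroup N\<^esub>)" "?d x \<in> H" if "x \<in> ?F" for x
  proof -
    have "x0 \<in> carrier ?G" using x0(1) H.subset by auto
    moreover have "f0 \<in> carrier (AutoGroup N)"
      using x0 H.subset subgroup.subset[OF assms(2)] by (force simp: mem_Times_iff)
    ultimately have "snd (?d x) = \<one>\<^bsub>AutoGroup N\<^esub>"
      using that x0(2) by (simp add: snd_mult_aut_semidirect snd_inv_aut_semidirect[OF assms(1,2)])
    then show "?d x = (fst (?d x), \<one>\<^bsub>AutoGroup N\<^esub>)" by (metis prod.collapse)
    show "?d x \<in> H" using that x0(1) by simp
  qed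
  have "inj_on (\<lambda>x. fst (?d x)) ?F"
  proof (rule inj_onI)
    fix x x' assume "x \<in> ?F" "x' \<in> ?F" "fst (?d x) = fst (?d x')"
    then have "?d x = ?d x'" using d(1) by (metis (no_types, lifting))
    moreover have "x \<in> carrier ?G" "x' \<in> carrier ?G" "x0 \<in> carrier ?G"
      using \<open>x \<in> ?F\<close> \<open>x' \<in> ?F\<close> x0(1) H.subset by auto
    ultimately show "x = x'" by (metis G.inv_closed G.r_cancel)
  qed
  moreover have "(\<lambda>x. fst (?d x)) ` ?F \<subseteq> {b. (b, \<one>\<^bsub>AutoGroup N\<^esub>) \<in> H}"
    using d by (metis (no_types, lifting) image_subsetI mem_Collect_eq)
  moreover have "finite {b. (b, \<one>\<^bsub>AutoGroup N\<^esub>) \<in> H}"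
    using finite_imageI[OF assms(4), of fst] by (rule finite_subset[rotated]) force
  ultimately show "card ?F \<le> card {b. (b, \<one>\<^bsub>AutoGroup N\<^esub>) \<in> H}"
    by (rule card_inj_on_le)
qed

lemma totient_eq_card_coprime_lessThan: "totient m = card {u. u < m \<and> coprime u m}"
proof (cases "m > 1")
  case True
  have "u \<in> totatives m \<longleftrightarrow> u < m \<and> coprime u m" for u
    using True totatives_less[of u m] by (cases "u = 0") (auto simp: in_totatives_iff)
  then have "{u. u < m \<and> coprime u m} = totatives m" by blast
  then show ?thesis by (simp add: totient_def)
next
  case False
  then have "m = 0 \<or> m = 1" by auto
  then show ?thesis by auto
qed

lemma (in group) ord_auto_apply:
  assumes "f \<in> auto G" and "x \<in> carrier G"
  shows "ord (f x) = ord x"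
proof -
  have hom: "f \<in> hom G G" and inj: "inj_on f (carrier G)"
    using assms(1) by (auto simp: auto_def Bij_def bij_betw_def)
  have "f x [^] k = \<one> \<longleftrightarrow> x [^] k = \<one>" for k :: nat
  proof -
    have "f x [^] k = f (x [^] k)" using hom_nat_pow[OF hom assms(2)] is_group by simp
    moreover have "f \<one> = \<one>" using hom_one[OF hom] is_group by simp
    ultimately show ?thesis using inj_on_eq_iff[OF inj] assms(2) by (metis one_closed nat_pow_closed)
  qed
  then have "ord (f x) dvd k \<longleftrightarrow> ord x dvd k" for k
    using assms hom by (simp add: pow_eq_id hom_in_carrier)
  then show ?thesis by (metis dvd_antisym dvd_refl)
qed

definition power_map :: "('a, 'b) monoid_scheme \<Rightarrow> nat \<Rightarrow> 'a \<Rightarrow> 'a" where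
  "power_map N u = (\<lambda>x \<in> carrier N. x [^]\<^bsub>N\<^esub> u)"

lemma power_map_apply: "x \<in> carrier N \<Longrightarrow> power_map N u x = x [^]\<^bsub>N\<^esub> u"
  by (simp add: power_map_def)

lemma (in comm_group) power_map_in_auto:
  assumes "finite (carrier G)" and "coprime u (order G)"
  shows "power_map G u \<in> auto G"
proof -
  have hom: "power_map G u \<in> hom G G"
    by (auto simp: power_map_def hom_def nat_pow_distrib)
  have inj: "inj_on (power_map G u) (carrier G)"
  proof (rule inj_onI)
    fix x y assume x: "x \<in> carrier G" and y: "y \<in> carrier G"
      and "power_map G u x = power_map G u y"
    then have "(x \<otimes> inv y) [^] u = \<one>"
      by (simp add: power_map_def nat_pow_distrib nat_pow_inv)
    then have "ord (x \<otimes> inv y) dvd gcd u (order G)"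
      using x y assms(1) by (simp add: pow_eq_id ord_dvd_group_order)
    then have "x \<otimes> inv y = \<one>" using assms(2) x y by (simp add: ord_eq_1 [symmetric])
    then show "x = y" using x y by (metis inv_closed l_inv m_assoc l_one r_one)
  qed
  have "power_map G u ` carrier G = carrier G"
    using hom inj assms(1) by (intro endo_inj_surj) (auto simp: hom_def)
  with hom inj show ?thesis
    by (simp add: auto_def Bij_def bij_betw_def power_map_def)
qed

lemma (in group) power_map_mult:
  assumes "power_map G u \<in> auto G" and "power_map G v \<in> auto G"
  shows "power_map G u \<otimes>\<^bsub>AutoGroup G\<^esub> power_map G v = power_map G (u * v)"
  using assms
  by (auto simp: AutoGroup_def BijGroup_def auto_def compose_def power_map_def nat_pow_pow
      mult.commute intro!: ext)

lemma (in group) AutoGroup_one_eq_power_map: "\<one>\<^bsub>AutoGroup G\<^esub> = power_map G 1"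
  by (auto simp: AutoGroup_def BijGroup_def power_map_def intro!: restrict_ext)

lemma (in comm_group) power_map_pow:
  assumes "finite (carrier G)" and "coprime u (order G)"
  shows "power_map G u [^]\<^bsub>AutoGroup G\<^esub> (k :: nat) = power_map G (u ^ k)"
proof (induction k)
  case 0
  then show ?case by (simp add: AutoGroup_one_eq_power_map)
next
  case (Suc k)
  have "power_map G (u ^ k) \<in> auto G" "power_map G u \<in> auto G"
    using assms by (auto simp: power_map_in_auto)
  then show ?case using Suc by (simp add: power_map_mult mult.commute)
qed

locale finite_cyclic_group = group N for N :: "('a, 'b) monoid_scheme" (structure) +
  fixes g :: 'a
  assumes generator_closed: "g \<in> carrier N"
    and generator: "subgroup_generated N {g} = N"
    and finite_carrier: "finite (carrier N)"
begin

sublocale comm_group N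
  using cyclic_imp_abelian_group generator_closed generator by (auto simp: cyclic_group_def)

lemma ord_generator: "ord g = order N"
  using cyclic_order_is_ord[OF generator_closed] generator by simp

lemma pow_generator_eq_iff: "g [^] i = g [^] j \<longleftrightarrow> [i = j] (mod order N)"
proof -
  have "g [^] i = g [^] j \<longleftrightarrow> g [^] int i = g [^] int j" by (simp add: int_pow_int)
  also have "\<dots> \<longleftrightarrow> [int j = int i] (mod int (order N))"
    using int_pow_eq[OF generator_closed] ord_generator by (simp add: cong_iff_dvd_diff)
  finally show ?thesis by (simp add: cong_int_iff cong_sym_eq)
qed

lemma ex_pow_generator:
  assumes "x \<in> carrier N"
  shows "\<exists>i < order N. g [^] i = x"
proof -
  have "order N > 0" using finite_carrier by (simp add: order_gt_0_iff_finite)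
  have "carrier N = generate N {g}"
    using generator generator_closed
    by (metis carrier_subgroup_generated inf.absorb2 empty_subsetI insert_subset)
  also have "\<dots> = {g [^] k | k. k \<in> (UNIV :: nat set)}"
    using generate_pow_nat[OF generator_closed] ord_generator \<open>order N > 0\<close> by simp
  finally have "x \<in> {g [^] k | k. k \<in> (UNIV :: nat set)}" using assms by simp
  then obtain k :: nat where "g [^] k = x" by blast
  then have "g [^] (k mod order N) = x" by (metis pow_generator_eq_iff cong_mod_left cong_refl)
  then show ?thesis using \<open>order N > 0\<close> mod_less_divisor by blast
qed

definition dlog :: "'a \<Rightarrow> nat" where
  "dlog x = (SOME i. i < order N \<and> g [^] i = x)"

lemma
  assumes "x \<in> carrier N"
  shows dlog_less: "dlog x < order N" and pow_dlog: "g [^] dlog x = x"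
  using someI_ex[OF ex_pow_generator[OF assms]] by (auto simp: dlog_def)

lemma auto_eq_power_maps: "auto N = power_map N ` {u. u < order N \<and> coprime u (order N)}"
proof
  show "power_map N ` {u. u < order N \<and> coprime u (order N)} \<subseteq> auto N"
    using power_map_in_auto finite_carrier by blast
next
  show "auto N \<subseteq> power_map N ` {u. u < order N \<and> coprime u (order N)}"
  proof
    fix f assume f: "f \<in> auto N"
    then have hom: "f \<in> hom N N" by (simp add: auto_def)
    define u where "u = dlog (f g)"
    have fg: "f g = g [^] u"
      using hom generator_closed by (simp add: u_def pow_dlog hom_in_carrier)
    have "f = power_map N u"
    proof (rule extensionalityI[of _ "carrier N"])
      show "f \<in> extensional (carrier N)" using f by (simp add: auto_def Bij_def)
      show "power_map N u \<in> extensional (carrier N)" by (simp add: power_map_def)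
      fix x assume "x \<in> carrier N"
      then have "f x = f g [^] dlog x"
        using hom_nat_pow[OF hom generator_closed] is_group by (metis pow_dlog)
      moreover have "(g [^] u) [^] dlog x = (g [^] dlog x) [^] u"
        using generator_closed by (simp add: nat_pow_pow mult.commute)
      ultimately show "f x = power_map N u x"
        using \<open>x \<in> carrier N\<close> by (simp add: fg power_map_def pow_dlog)
    qed
    moreover have "coprime u (order N)"
      using pow_ord_eq_ord_iff[OF finite_carrier generator_closed, of u]
        ord_auto_apply[OF f generator_closed] fg ord_generator by simp
    ultimately show "f \<in> power_map N ` {u. u < order N \<and> coprime u (order N)}"
      using dlog_less hom generator_closed by (auto simp: u_def hom_in_carrier)
  qed
qed

lemma inj_on_power_map: "inj_on (power_map N) {..<order N}"
proof (rule inj_onI)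
  fix u v assume "u \<in> {..<order N}" "v \<in> {..<order N}" "power_map N u = power_map N v"
  then have "g [^] u = g [^] v"
    using generator_closed by (metis power_map_def restrict_apply')
  then show "u = v" using \<open>u \<in> _\<close> \<open>v \<in> _\<close> by (simp add: pow_generator_eq_iff cong_def)
qed

lemma card_auto: "card (auto N) = totient (order N)"
  using inj_on_power_map by (simp add: auto_eq_power_maps totient_eq_card_coprime_lessThan
      card_image inj_on_subset subset_iff)

lemma card_pow_fiber_le: "card {x \<in> carrier N. x [^] d = y} \<le> gcd d (order N)"
proof -
  let ?F = "{x \<in> carrier N. x [^] d = y}"
  let ?m = "order N div gcd d (order N)"
  have "order N > 0" using finite_carrier by (simp add: order_gt_0_iff_finite)
  have "inj_on dlog ?F" by (rule inj_onI) (metis (no_types, lifting) mem_Collect_eq pow_dlog)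
  then have "card ?F = card (dlog ` ?F)" by (simp add: card_image)
  also have "\<dots> \<le> order N div ?m"
  proof (rule card_le_div_if_cong)
    show "dlog ` ?F \<subseteq> {..<order N}" using dlog_less by auto
    show "?m dvd order N" by (metis dvd_div_mult_self dvd_triv_left gcd_dvd2)
    show "?m > 0" using \<open>order N > 0\<close> by (simp add: div_greater_zero_iff gcd_le2_nat)
    fix i j assume "i \<in> dlog ` ?F" "j \<in> dlog ` ?F"
    then obtain x x' where "x \<in> ?F" "x' \<in> ?F" "i = dlog x" "j = dlog x'" by blast
    moreover have "g [^] (dlog z * d) = z [^] d" if "z \<in> carrier N" for z
      using that generator_closed by (simp add: nat_pow_pow [symmetric] pow_dlog)
    ultimately have "g [^] (d * i) = g [^] (d * j)" by (simp add: mult.commute)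
    then show "[i = j] (mod ?m)"
      using \<open>order N > 0\<close> by (simp add: pow_generator_eq_iff cong_cancel_div_gcd_nat)
  qed
  also have "order N div ?m = gcd d (order N)"
  proof -
    obtain k where k: "order N = gcd d (order N) * k" using gcd_dvd2 by blast
    then have "k > 0" using \<open>order N > 0\<close> by (metis mult_0_right neq0_conv)
    then show ?thesis by (subst (1 2) k) simp
  qed
  finally show ?thesis .
qed

end

locale sylow_holomorph = finite_cyclic_group N g for N :: "('a, 'b) monoid_scheme" (structure) and g +
  fixes p n :: nat and K :: "('a \<Rightarrow> 'a) set"
  assumes prime_p: "Factorial_Ring.prime p" and n_pos: "n > 0"
    and order_N: "order N = p ^ n" and sylow: "sylow_subgroup (AutoGroup N) p K"
begin

abbreviation G where "G \<equiv> aut_semidirect N K"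

lemma p_gt_1: "p > 1"
  using prime_p prime_gt_1_nat by blast

lemma K_subgroup: "subgroup K (AutoGroup N)"
  using sylow by (simp add: sylow_subgroup_def)

lemma card_K: "card K = p ^ (n - 1)"
proof -
  have "order (AutoGroup N) = card (auto N)" by (simp add: order_def carrier_AutoGroup)
  also have "\<dots> = totient (p ^ n)" using card_auto order_N by simp
  also have "\<dots> = p ^ (n - 1) * (p - 1)" by (rule totient_prime_power[OF prime_p n_pos])
  finally have "order (AutoGroup N) = p ^ (n - 1) * (p - 1)" .
  moreover have "multiplicity p (p ^ (n - 1) * (p - 1)) = n - 1"
  proof -
    have "\<not> p dvd p - 1" using p_gt_1 by (simp add: nat_dvd_not_less)
    then have "multiplicity p (p - 1) = 0" by (rule not_dvd_imp_multiplicity_0)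
    moreover have "p ^ (n - 1) \<noteq> 0" "p - 1 \<noteq> 0" using p_gt_1 by auto
    ultimately show ?thesis
      using prime_p by (simp add: prime_elem_multiplicity_mult_distrib)
  qed
  ultimately show ?thesis using sylow by (simp add: sylow_subgroup_def)
qed

lemma K_pow_eq_one:
  assumes "f \<in> K"
  shows "f [^]\<^bsub>AutoGroup N\<^esub> p ^ (n - 1) = \<one>\<^bsub>AutoGroup N\<^esub>"
proof -
  interpret K: group "AutoGroup N\<lparr>carrier := K\<rparr>"
    using subgroup.subgroup_is_group[OF K_subgroup AutoGroup] .
  have "f [^]\<^bsub>AutoGroup N\<lparr>carrier := K\<rparr>\<^esub> p ^ (n - 1) = \<one>\<^bsub>AutoGroup N\<^esub>"
    using K.pow_order_eq_1 assms card_K by (simp add: order_def)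
  then show ?thesis by (simp add: nat_pow_def)
qed

lemma K_power_mapE:
  assumes "f \<in> K"
  obtains u where "f = power_map N u" and "0 < u" and "u < p ^ n" and "p dvd u - 1"
proof -
  have "f \<in> auto N" using assms subgroup.subset[OF K_subgroup] carrier_AutoGroup by blast
  then obtain u where u: "u < p ^ n" "coprime u (p ^ n)" "f = power_map N u"
    using auto_eq_power_maps order_N by auto
  have "power_map N (u ^ p ^ (n - 1)) = power_map N 1"
    using K_pow_eq_one[OF assms] power_map_pow[OF finite_carrier, of u "p ^ (n - 1)"] u
    by (simp add: order_N AutoGroup_one_eq_power_map)
  then have "g [^] (u ^ p ^ (n - 1)) = g [^] (1 :: nat)"
    using generator_closed by (metis power_map_def restrict_apply')
  then have "[u ^ p ^ (n - 1) = 1] (mod p ^ n)"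
    by (simp only: pow_generator_eq_iff order_N)
  then have "[u ^ p ^ (n - 1) = 1] (mod p)"
    by (rule cong_dvd_modulus_nat) (use n_pos in simp)
  then have "[u = 1] (mod p)"
    using cong_pow_prime_power_self[OF prime_p] by (metis cong_sym cong_trans)
  moreover from this have "u > 0"
    using p_gt_1 by (cases u) (auto simp: cong_def)
  ultimately show thesis
    using u that by (auto simp: cong_altdef_nat)
qed

lemma group_G: "group G"
  using group_aut_semidirect[OF is_group K_subgroup] .

lemma order_G: "order G = p ^ n * p ^ (n - 1)"
  using order_N card_K by (simp add: order_def card_cartesian_product)

lemma finite_G: "finite (carrier G)"
  using finite_carrier card_ge_0_finite[of K] card_K p_gt_1 by simp

lemma commutator_power_maps:
  assumes "a \<in> carrier N" and "b \<in> carrier N"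
    and "power_map N u \<in> K" and "power_map N v \<in> K" and "u > 0" and "v > 0"
  shows "(a, power_map N u) \<otimes>\<^bsub>G\<^esub> (b, power_map N v) \<otimes>\<^bsub>G\<^esub> inv\<^bsub>G\<^esub> (a, power_map N u)
      \<otimes>\<^bsub>G\<^esub> inv\<^bsub>G\<^esub> (b, power_map N v) = (b [^] (u - 1) \<otimes> inv (a [^] (v - 1)), \<one>\<^bsub>AutoGroup N\<^esub>)"
proof -
  interpret G: group G by (rule group_G)
  interpret A: group "AutoGroup N" by (rule AutoGroup)
  have auto: "power_map N u \<in> auto N" "power_map N v \<in> auto N"
    using assms(3,4) subgroup.subset[OF K_subgroup] by (auto simp: carrier_AutoGroup)
  have uv: "power_map N (u * v) \<in> carrier (AutoGroup N)"
    using A.m_closed auto power_map_mult[OF auto] carrier_AutoGroup by metis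
  have pow: "a [^] v = a [^] (v - 1) \<otimes> a" "b [^] u = b [^] (u - 1) \<otimes> b"
    using assms(1,2,5,6) by (metis Suc_diff_1 nat_pow_Suc)+
  have "b [^] (u - 1) \<otimes> inv (a [^] (v - 1)) \<otimes> (b \<otimes> a [^] v) = a \<otimes> b [^] u"
    using assms(1,2) by (simp add: pow m_ac)
  with assms auto uv
  have "(b [^] (u - 1) \<otimes> inv (a [^] (v - 1)), \<one>\<^bsub>AutoGroup N\<^esub>) \<otimes>\<^bsub>G\<^esub> ((b, power_map N v) \<otimes>\<^bsub>G\<^esub> (a, power_map N u))
      = (a, power_map N u) \<otimes>\<^bsub>G\<^esub> (b, power_map N v)"
    by (simp add: power_map_mult AutoGroup_one_apply mult.commute power_map_apply A.l_one)
  then show ?thesis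
    using assms subgroup.one_closed[OF K_subgroup] by (subst G.commutator_eq_iff) auto
qed

lemma subgroup_pow_eq_one:
  fixes k :: nat
  shows "subgroup ((\<lambda>x. (x, \<one>\<^bsub>AutoGroup N\<^esub>)) ` {x \<in> carrier N. x [^] k = \<one>}) G"
proof -
  interpret A: group "AutoGroup N" by (rule AutoGroup)
  let ?D = "(\<lambda>x. (x, \<one>\<^bsub>AutoGroup N\<^esub>)) ` {x \<in> carrier N. x [^] k = \<one>}"
  have one_K: "\<one>\<^bsub>AutoGroup N\<^esub> \<in> K" using subgroup.one_closed[OF K_subgroup] .
  show ?thesis
  proof (rule group.subgroupI[OF group_G])
    show "?D \<subseteq> carrier G" using one_K by auto
  next
    have "\<one> \<in> {x \<in> carrier N. x [^] k = \<one>}" by simp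
    then show "?D \<noteq> {}" by blast
  next
    fix d assume "d \<in> ?D"
    then obtain x where x: "d = (x, \<one>\<^bsub>AutoGroup N\<^esub>)" "x \<in> carrier N" "x [^] k = \<one>"
      by blast
    have "inv\<^bsub>G\<^esub> d = (inv x, \<one>\<^bsub>AutoGroup N\<^esub>)"
      using x one_K by (intro group.inv_equality[OF group_G]) (auto simp: AutoGroup_one_apply)
    moreover have "inv x [^] k = \<one>" using x by (simp add: nat_pow_inv)
    ultimately show "inv\<^bsub>G\<^esub> d \<in> ?D" using x by auto
  next
    fix d d' assume "d \<in> ?D" and "d' \<in> ?D"
    then obtain x y where "d = (x, \<one>\<^bsub>AutoGroup N\<^esub>)" "x \<in> carrier N" "x [^] k = \<one>"
      and "d' = (y, \<one>\<^bsub>AutoGroup N\<^esub>)" "y \<in> carrier N" "y [^] k = \<one>" by blast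
    then show "d \<otimes>\<^bsub>G\<^esub> d' \<in> ?D" by (auto simp: AutoGroup_one_apply nat_pow_distrib)
  qed
qed

lemma pow_pow_prime_power_eq_one:
  assumes "x \<in> carrier N" and "p dvd m"
  shows "(x [^] m) [^] p ^ (n - 1) = \<one>"
proof -
  have "p ^ n dvd m * p ^ (n - 1)"
    using assms(2) n_pos by (metis mult_dvd_mono dvd_refl power_minus_mult mult.commute)
  then obtain k where "m * p ^ (n - 1) = p ^ n * k" by blast
  then have "(x [^] m) [^] p ^ (n - 1) = (x [^] p ^ n) [^] k"
    using assms(1) by (simp add: nat_pow_pow)
  then show ?thesis
    using assms(1) pow_order_eq_1[of x] order_N by simp
qed

lemma commutator_G_mem:
  assumes "x \<in> carrier G" and "y \<in> carrier G"
  shows "x \<otimes>\<^bsub>G\<^esub> y \<otimes>\<^bsub>G\<^esub> inv\<^bsub>G\<^esub> x \<otimes>\<^bsub>G\<^esub> inv\<^bsub>G\<^esub> y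
    \<in> (\<lambda>x. (x, \<one>\<^bsub>AutoGroup N\<^esub>)) ` {x \<in> carrier N. x [^] p ^ (n - 1) = \<one>}"
proof -
  obtain a f b h where "x = (a, f)" "y = (b, h)" "a \<in> carrier N" "b \<in> carrier N" "f \<in> K" "h \<in> K"
    using assms by auto
  moreover obtain u v where "f = power_map N u" "0 < u" "p dvd u - 1"
    and "h = power_map N v" "0 < v" "p dvd v - 1"
    using K_power_mapE \<open>f \<in> K\<close> \<open>h \<in> K\<close> by metis
  ultimately have xy: "x = (a, power_map N u)" "y = (b, power_map N v)"
    "a \<in> carrier N" "b \<in> carrier N" "power_map N u \<in> K" "power_map N v \<in> K"
    "0 < u" "0 < v" "p dvd u - 1" "p dvd v - 1" by auto
  let ?c = "b [^] (u - 1) \<otimes> inv (a [^] (v - 1))"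
  have "?c \<in> carrier N" using xy by simp
  moreover have "?c [^] p ^ (n - 1) = \<one>"
    using xy pow_pow_prime_power_eq_one[of b "u - 1"] pow_pow_prime_power_eq_one[of a "v - 1"]
    by (simp add: nat_pow_distrib nat_pow_inv)
  ultimately show ?thesis using xy commutator_power_maps by simp
qed

lemma derived_G_subset:
  "derived G (carrier G) \<subseteq> (\<lambda>x. (x, \<one>\<^bsub>AutoGroup N\<^esub>)) ` {x \<in> carrier N. x [^] p ^ (n - 1) = \<one>}"
  unfolding derived_def
  by (rule group.generate_subgroup_incl[OF group_G _ subgroup_pow_eq_one])
    (use commutator_G_mem in blast)

lemma abelianization_order_G_ge: "p ^ n \<le> abelianization_order G"
proof -
  interpret G: group G by (rule group_G)
  let ?S = "{x \<in> carrier N. x [^] p ^ (n - 1) = \<one>}"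
  have "card (derived G (carrier G)) \<le> card ((\<lambda>x. (x, \<one>\<^bsub>AutoGroup N\<^esub>)) ` ?S)"
    using derived_G_subset finite_carrier by (intro card_mono) auto
  also have "\<dots> \<le> card ?S"
    using finite_carrier by (intro card_image_le) auto
  also have "\<dots> \<le> gcd (p ^ (n - 1)) (p ^ n)"
    using card_pow_fiber_le order_N by metis
  also have "\<dots> = p ^ (n - 1)"
    by (simp add: gcd_nat.absorb1 le_imp_power_dvd)
  finally have "card (derived G (carrier G)) \<le> p ^ (n - 1)" .
  moreover have "abelianization_order G * card (derived G (carrier G)) = p ^ n * p ^ (n - 1)"
    using G.abelianization_order_subgroup[OF G.subgroup_self finite_G] order_G
    by (simp add: order_def del: aut_semidirect_simps)
  ultimately have "p ^ n * p ^ (n - 1) \<le> abelianization_order G * p ^ (n - 1)"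
    by (metis mult_le_mono2)
  then show ?thesis using p_gt_1 by simp
qed

lemma card_kernel_snd_le:
  assumes "subgroup H G" and "(a0, power_map N u0) \<in> H" and "0 < u0"
  shows "card {b. (b, \<one>\<^bsub>AutoGroup N\<^esub>) \<in> H} \<le> gcd (u0 - 1) (p ^ n) * card (derived G H)"
proof -
  interpret G: group G by (rule group_G)
  interpret H: subgroup H G by fact
  let ?M = "{b. (b, \<one>\<^bsub>AutoGroup N\<^esub>) \<in> H}"
  let ?c = "\<lambda>b. inv (b [^] (u0 - 1))"
  have a0: "a0 \<in> carrier N" "power_map N u0 \<in> K" using assms(2) H.subset by auto
  have M: "b \<in> carrier N" if "b \<in> ?M" for b using that H.subset by auto
  have "finite ?M" using M finite_carrier by (meson finite_subset subsetI)
  have "(?c b, \<one>\<^bsub>AutoGroup N\<^esub>) \<in> derived G H" if "b \<in> ?M" for b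
  proof -
    have "(b, power_map N 1) \<otimes>\<^bsub>G\<^esub> (a0, power_map N u0) \<otimes>\<^bsub>G\<^esub> inv\<^bsub>G\<^esub> (b, power_map N 1)
        \<otimes>\<^bsub>G\<^esub> inv\<^bsub>G\<^esub> (a0, power_map N u0) \<in> derived_set G H"
      using that assms(2) unfolding AutoGroup_one_eq_power_map by blast
    moreover have "power_map N 1 \<in> K"
      using subgroup.one_closed[OF K_subgroup] by (simp add: AutoGroup_one_eq_power_map)
    ultimately show ?thesis
      using commutator_power_maps[of b a0 1 u0] M[OF that] a0 assms(3)
      by (simp add: derived_def generate.incl AutoGroup_one_eq_power_map)
  qed
  then have "(\<lambda>x. (x, \<one>\<^bsub>AutoGroup N\<^esub>)) ` ?c ` ?M \<subseteq> derived G H" by auto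
  then have image_le: "card (?c ` ?M) \<le> card (derived G H)"
    using G.derived_in_carrier[OF H.subset] finite_G
    by (metis (no_types, lifting) card_image card_mono finite_subset inj_onI prod.inject)
  have "card {b \<in> ?M. ?c b = y} \<le> gcd (u0 - 1) (p ^ n)" for y
  proof -
    have "{b \<in> ?M. ?c b = y} \<subseteq> {x \<in> carrier N. x [^] (u0 - 1) = inv y}"
      using M by (auto simp: inv_inv)
    then have "card {b \<in> ?M. ?c b = y} \<le> card {x \<in> carrier N. x [^] (u0 - 1) = inv y}"
      using finite_carrier by (intro card_mono) auto
    then show ?thesis using card_pow_fiber_le[of "u0 - 1" "inv y"] unfolding order_N by linarith
  qed
  then have "card ?M \<le> gcd (u0 - 1) (p ^ n) * card (?c ` ?M)"
    by (rule card_le_mult_card_image[OF \<open>finite ?M\<close>])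
  with image_le show ?thesis by (meson le_trans mult_le_mono2)
qed

lemma card_snd_image_le:
  assumes "subgroup H G" and "t dvd p ^ n" and "0 < t"
    and "\<And>u. 0 < u \<Longrightarrow> u < p ^ n \<Longrightarrow> power_map N u \<in> snd ` H \<Longrightarrow> t dvd u - 1"
  shows "card (snd ` H) \<le> p ^ n div t"
proof -
  interpret H: subgroup H G by fact
  let ?U = "{u. 0 < u \<and> u < p ^ n \<and> power_map N u \<in> snd ` H}"
  have "snd ` H \<subseteq> power_map N ` ?U"
  proof
    fix f assume "f \<in> snd ` H"
    then have "f \<in> K" using H.subset by auto
    then obtain u where "f = power_map N u" "0 < u" "u < p ^ n" by (rule K_power_mapE)
    then show "f \<in> power_map N ` ?U" using \<open>f \<in> snd ` H\<close> by auto
  qed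
  moreover have "?U \<subseteq> {..<p ^ n}" by auto
  ultimately have "card (snd ` H) \<le> card ?U"
    by (meson card_image_le card_mono finite_imageI finite_lessThan finite_subset le_trans)
  also have "\<dots> \<le> p ^ n div t"
  proof (rule card_le_div_if_cong)
    have "[u = 1] (mod t)" if "u \<in> ?U" for u
      using that assms(4)[of u] by (simp add: cong_altdef_nat)
    then show "[i = j] (mod t)" if "i \<in> ?U" "j \<in> ?U" for i j
      using that by (meson cong_sym cong_trans)
  qed (use assms(2,3) in auto)
  finally show ?thesis .
qed

lemma subgroup_least_gcd_exponentE:
  assumes "subgroup H G"
  obtains a0 u0 where "(a0, power_map N u0) \<in> H" and "0 < u0"
    and "\<And>u. 0 < u \<Longrightarrow> u < p ^ n \<Longrightarrow> power_map N u \<in> snd ` H \<Longrightarrow> gcd (u0 - 1) (p ^ n) dvd u - 1"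
proof -
  interpret H: subgroup H G by fact
  let ?U = "{u. 0 < u \<and> u < p ^ n \<and> power_map N u \<in> snd ` H}"
  have "1 \<in> ?U"
  proof -
    have "(\<one>, power_map N 1) \<in> H"
      using H.one_closed by (simp add: AutoGroup_one_eq_power_map)
    then have "power_map N 1 \<in> snd ` H" by (metis image_eqI snd_conv)
    moreover have "1 < p ^ n" using one_less_power[OF p_gt_1 n_pos] .
    ultimately show ?thesis by simp
  qed
  then obtain s0 where "s0 \<in> (\<lambda>u. u - 1) ` ?U"
    and s0_min: "\<And>s. s \<in> (\<lambda>u. u - 1) ` ?U \<Longrightarrow> gcd s0 (p ^ n) dvd s"
    using obtain_least_gcd_prime_power[OF prime_p, of "(\<lambda>u. u - 1) ` ?U"] by blast
  then obtain u0 where "u0 \<in> ?U" "s0 = u0 - 1" by blast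
  moreover from this obtain a0 where "(a0, power_map N u0) \<in> H" by force
  ultimately show thesis using that s0_min by blast
qed

lemma card_subgroup_le_mult_derived:
  assumes "subgroup H G"
  shows "card H \<le> p ^ n * card (derived G H)"
proof -
  obtain a0 u0 where "(a0, power_map N u0) \<in> H" and "0 < u0"
    and least: "\<And>u. 0 < u \<Longrightarrow> u < p ^ n \<Longrightarrow> power_map N u \<in> snd ` H \<Longrightarrow> gcd (u0 - 1) (p ^ n) dvd u - 1"
    using subgroup_least_gcd_exponentE[OF assms] by blast
  define t where "t = gcd (u0 - 1) (p ^ n)"
  have "t dvd p ^ n" "0 < t" using p_gt_1 by (simp_all add: t_def)
  have "finite H" using finite_G subgroup.subset[OF assms] finite_subset by blast
  then have "card H \<le> card {b. (b, \<one>\<^bsub>AutoGroup N\<^esub>) \<in> H} * card (snd ` H)"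
    using card_subgroup_aut_semidirect_le[OF is_group K_subgroup assms] by blast
  also have "\<dots> \<le> (t * card (derived G H)) * (p ^ n div t)"
    using card_kernel_snd_le[OF assms \<open>(a0, power_map N u0) \<in> H\<close> \<open>0 < u0\<close>]
      card_snd_image_le[OF assms \<open>t dvd p ^ n\<close> \<open>0 < t\<close>] least
    by (intro mult_le_mono) (simp_all add: t_def)
  also have "\<dots> = t * (p ^ n div t) * card (derived G H)" by (simp only: ac_simps)
  finally show ?thesis using \<open>t dvd p ^ n\<close> by simp
qed

lemma abelianization_order_subgroup_le:
  assumes "subgroup H G"
  shows "abelianization_order (G\<lparr>carrier := H\<rparr>) \<le> p ^ n"
proof -
  interpret G: group G by (rule group_G)
  have "finite H" using finite_G subgroup.subset[OF assms] finite_subset by blast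
  have "finite (derived G H)"
    using G.derived_in_carrier[OF subgroup.subset[OF assms]] finite_G finite_subset by blast
  then have "card (derived G H) > 0"
    using subgroup.one_closed[OF G.derived_is_subgroup[OF subgroup.subset[OF assms]]]
    by (auto simp: card_gt_0_iff)
  moreover have "abelianization_order (G\<lparr>carrier := H\<rparr>) * card (derived G H) \<le> p ^ n * card (derived G H)"
    using G.abelianization_order_subgroup[OF assms \<open>finite H\<close>] card_subgroup_le_mult_derived[OF assms] by simp
  ultimately show ?thesis by simp
qed

end

theorem lemma2p8:
  fixes N :: "('a, 'b) monoid_scheme" and p n :: nat and K :: "('a \<Rightarrow> 'a) set"
  assumes "Factorial_Ring.prime p" and "n \<ge> 2"
    and "group N" and "cyclic_group N" and "order N = p ^ n"
    and "sylow_subgroup (AutoGroup N) p K"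
  shows "weakly_top (aut_semidirect N K)"
proof -
  obtain g where "g \<in> carrier N" and "subgroup_generated N {g} = N"
    using assms(4) by (auto simp: cyclic_group_def)
  moreover have "finite (carrier N)"
    using assms(1,5) monoid.order_gt_0_iff_finite[OF group.is_monoid[OF assms(3)]] prime_gt_0_nat by simp
  ultimately interpret sylow_holomorph N g p n K
    using assms by (auto intro!: sylow_holomorph.intro sylow_holomorph_axioms.intro
        finite_cyclic_group.intro finite_cyclic_group_axioms.intro)
  show ?thesis
    unfolding weakly_top_def
    using group_G finite_G abelianization_order_subgroup_le abelianization_order_G_ge le_trans
    by blast
qed

end
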